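(* Let $M\ge 2$ and let $\mathfrak{e}=\{\mathbf{e}_1,\dots,\mathbf{e}_M\}$ be an arbitrary (not necessarily orthonormal) basis of the Euclidean space $\mathbb{R}^M$, with metric tensor $g_{ij}=(\mathbf{e}_i\cdot\mathbf{e}_j)$. Let $\boldsymbol{n}=\sum_{j=1}^M \mathbf{e}_j n^j$ be a unit vector, let $\Upsilon=\{\mathbf{r}:\mathbf{r}\cdot\boldsymbol{n}=0\}$ be the hyperplane orthogonal to it, bounding the half-space $\mathbb{R}^{M+}=\{\mathbf{r}:\mathbf{r}\cdot\boldsymbol{n}>0\}$. Let $D^{ij}$ be the components in the basis $\mathfrak{e}$ of a symmetric positive definite contravariant $2$-tensor (the diffusion tensor), i.e. $\mathbf{D}=\sum_{i,j}D^{ij}\mathbf{e}_i\otimes\mathbf{e}_j$, and set $D^i_j=\sum_{k}D^{ik}g_{kj}$ and $D_{ij}=\sum_{k,p}g_{ik}g_{jp}D^{kp}$. Define $$\omega=\Big[\sum_{i,j,p,k=1}^M g_{ij}D^i_pD^j_k n^p n^k\Big]^{1/2}.$$ Then there exists a basis $\mathfrak{b}=\mathfrak{b}_\Upsilon\cup\{\boldsymbol{b}_M\}$ of $\mathbb{R}^M$ with the following properties. (1) $\mathfrak{b}_\Upsilon=\{\mathbf{b}_1,\dots,\mathbf{b}_{M-1}\}$ is an orthonormal basis of $\Upsilon$, and $\boldsymbol{b}_M$ is the unit vector, not lying in $\Upsilon$, given by $$\boldsymbol{b}_M=\frac1\omega\sum_{i,j=1}^M \mathbf{e}_i D^i_j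 n^j .$$ (2) In the basis $\mathfrak{b}$ the diffusion tensor is diagonal: writing $\mathbf{D}=\sum_{i,j}\tilde D^{ij}\mathbf{b}_i\otimes\mathbf{b}_j$ (with $\mathbf{b}_M:=\boldsymbol{b}_M$), one has $\tilde D^{ij}=\mathcal{D}_i\delta_{ij}$ with all $\mathcal{D}_i>0$, and $$\mathcal{D}_M=\omega^2\Big[\sum_{i,j=1}^M D_{ij}n^in^j\Big]^{-1}.$$ (3) Suppose in addition that the initial basis has the form $\mathfrak{e}=\mathfrak{e}_\Upsilon\cup\{\boldsymbol{n}\}$, i.e. $\mathbf{e}_M=\boldsymbol{n}$ and $\mathfrak{e}_\Upsilon=\{\mathbf{e}_1,\dots,\mathbf{e}_{M-1}\}$ is a basis of $\Upsilon$. Let $u^\alpha_{\ \beta}$ ($\alpha,\beta=1,\dots,M-1$) be the invertible matrix defined by $\mathbf{e}_\alpha=\sum_{\beta=1}^{M-1}\mathbf{b}_\beta u^\beta_{\ \alpha}$, and let $\breve u^\alpha_{\ \beta}$ be its inverse, $\sum_{\gamma}\breve u^\alpha_{\ \gamma}u^\gamma_{\ \beta}=\delta^\alpha_\beta$. Then $D^{MM}>0$, and for every $\mathbf{r}\in\mathbb{R}^M$ written as $$\mathbf{r}=\sum_{\gamma=1}^{M-1}\mathbf{e}_\gamma x^\gamma+\boldsymbol{n}x^M=\sum_{\gamma=1}^{M-1}\mathbf{b}_\gamma\zeta^\gamma+\boldsymbol{b}_M\zeta^M$$ the coordinates satisfy $$\zeta^\alpha=\sum_{\gamma=1}^{M-1}u^\alpha_{\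 \gamma}\Big(x^\gamma-\frac{D^{\gamma M}}{D^{MM}}x^M\Big),\qquad \zeta^M=\frac{\omega}{D^{MM}}x^M,$$ $$x^\alpha=\sum_{\gamma=1}^{M-1}\breve u^\alpha_{\ \gamma}\zeta^\gamma+\frac{D^{\alpha M}}{\omega}\zeta^M,\qquad x^M=\frac{D^{MM}}{\omega}\zeta^M,$$ and moreover, for all $\alpha,\beta=1,\dots,M-1$, $$\sum_{\gamma=1}^{M-1}\breve u^\alpha_{\ \gamma}\breve u^\beta_{\ \gamma}\mathcal{D}_\gamma=D^{\alpha\beta}-\frac{D^{\alpha M}D^{\beta M}}{D^{MM}}.$$
   Context: Components of vectors are upper-indexed: a vector $\mathbf{r}$ has components $x^i$ in the basis $\mathfrak{e}$ if $\mathbf{r}=\sum_i\mathbf{e}_ix^i$. Tensor components in a new basis are obtained by the standard contravariant transformation rule, so that $\mathbf{D}=\sum D^{ij}\mathbf{e}_i\otimes\mathbf{e}_j=\sum\tilde D^{ij}\mathbf{b}_i\otimes\mathbf{b}_j$ describe the same tensor. Greek indices run over $1,\dots,M-1$ (directions in the hyperplane $\Upsilon$), Latin indices over $1,\dots,M$. *)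

theory Defs
  imports "HOL-Analysis.Analysis"
begin

text \<open>Vectors of the Euclidean space R^M are elements of real^'n with M = CARD('n).
  Bases and index families are functions on nat, used on the index set {1..M}.\<close>

definition is_basis :: "nat \<Rightarrow> (nat \<Rightarrow> real^'n) \<Rightarrow> bool" where
  "is_basis M e \<longleftrightarrow> inj_on e {1..M} \<and> independent (e ` {1..M}) \<and> span (e ` {1..M}) = UNIV"

text \<open>Tensor product of two vectors, as a matrix of components in the standard basis.\<close>
definition tprod :: "real^'n \<Rightarrow> real^'n \<Rightarrow> real^'n^'n" where
  "tprod x y = (\<chi> a c. x $ a * y $ c)"

definition gmet :: "(nat \<Rightarrow> real^'n) \<Rightarrow> nat \<Rightarrow> nat \<Rightarrow> real" where
  "gmet e i j = e i \<bullet> e j"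

definition Dmix :: "nat \<Rightarrow> (nat \<Rightarrow> real^'n) \<Rightarrow> (nat \<Rightarrow> nat \<Rightarrow> real) \<Rightarrow> nat \<Rightarrow> nat \<Rightarrow> real" where
  "Dmix M e D i j = (\<Sum>k\<in>{1..M}. D i k * gmet e k j)"

definition Dlow :: "nat \<Rightarrow> (nat \<Rightarrow> real^'n) \<Rightarrow> (nat \<Rightarrow> nat \<Rightarrow> real) \<Rightarrow> nat \<Rightarrow> nat \<Rightarrow> real" where
  "Dlow M e D i j = (\<Sum>k\<in>{1..M}. \<Sum>p\<in>{1..M}. gmet e i k * gmet e j p * D k p)"

definition omega :: "nat \<Rightarrow> (nat \<Rightarrow> real^'n) \<Rightarrow> (nat \<Rightarrow> nat \<Rightarrow> real) \<Rightarrow> (nat \<Rightarrow> real) \<Rightarrow> real" where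
  "omega M e D nc = sqrt (\<Sum>i\<in>{1..M}. \<Sum>j\<in>{1..M}. \<Sum>p\<in>{1..M}. \<Sum>k\<in>{1..M}.
      gmet e i j * Dmix M e D i p * Dmix M e D j k * nc p * nc k)"

end

theory Submission
  imports Defs
begin

(* Let T be the matrix of the diffusion tensor; it is symmetric positive definite, and so is its
   inverse. The hyperplane Y orthogonal to n has an orthonormal basis b_1, ..., b_(M-1) that is also
   orthogonal for the quadratic form of T^-1: maximize the form on the unit sphere of a subspace and
   recurse on the orthogonal complement of the maximizer. Adding b_M = T n / |T n| keeps the basis
   T^-1-orthogonal, because T^-1 b_M is a multiple of n. A T^-1-orthogonal basis diagonalizes T, with
   coefficients 1 / (b_i . T^-1 b_i); for i = M this is |T n|^2 / (n . T n).

   When e_M = n and the other e_a lie in Y, T n = sum_i D^iM e_i and n . T n = D^MM. Taking inner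
   products with n relates x^M and zeta^M; removing the b_M-part leaves a vector of Y whose
   coordinates are converted by u. Applied to r = b_g, these formulas give the e-coordinates of b_g,
   and inserting them into the transformation rule D^ab = sum_i Dc_i (b_i)^a (b_i)^b gives the last
   identity, the term i = M contributing D^aM D^bM / D^MM. *)

lemma linear_le_quadratic_imp_zero:
  fixes c K :: real
  assumes "\<And>t. 2 * t * c \<le> t\<^sup>2 * K"
  shows "c = 0"
proof (rule ccontr)
  assume "c \<noteq> 0"
  define a where "a = \<bar>K\<bar> + 1"
  have "a > 0" by (simp add: a_def add_pos_nonneg)
  have "2 * (c / a) * c * a\<^sup>2 \<le> (c / a)\<^sup>2 * K * a\<^sup>2"
    by (rule mult_right_mono[OF assms]) simp
  also have "2 * (c / a) * c * a\<^sup>2 = 2 * c\<^sup>2 * a"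
    using \<open>a > 0\<close> by (simp add: power2_eq_square)
  also have "(c / a)\<^sup>2 * K * a\<^sup>2 = c\<^sup>2 * K"
    using \<open>a > 0\<close> by (simp add: power_divide)
  also have "c\<^sup>2 * K < c\<^sup>2 * a"
    using \<open>c \<noteq> 0\<close> by (simp add: a_def)
  finally have "c\<^sup>2 * (2 * a) < c\<^sup>2 * a" by (simp add: mult_ac)
  then show False
    using \<open>a > 0\<close> \<open>c \<noteq> 0\<close> by simp
qed

lemma delta_mult_simps:
  "(if P then 1 else 0) * x = (if P then x else 0)"
  "x * (if P then 1 else 0) = (if P then x else 0)"
  "(if P then x else 0) * y = (if P then x * y else 0)"
  "y * (if P then x else 0) = (if P then y * x else 0)"
  "(if P then x else 0) *\<^sub>R w = (if P then x *\<^sub>R w else 0)"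
  for x y :: real and w :: "'a::real_vector"
  by simp_all

lemma sum_split_last: "0 < M \<Longrightarrow> (\<Sum>i\<in>{1..M}. g i) = (\<Sum>i\<in>{1..M-1}. g i) + g M" for M :: nat
proof -
  assume "0 < M"
  then have split: "{1..M} = insert M {1..M-1}" "M \<notin> {1..M-1}" by auto
  show ?thesis unfolding split(1) using split(2) by (simp add: add.commute)
qed

section \<open>Orthonormal bases diagonalizing a self-adjoint map on a subspace\<close>

lemma self_adjoint_maximizer_orthogonal:
  fixes f :: "'a::real_inner \<Rightarrow> 'a"
  assumes lin: "linear f" and adj: "\<And>x y. f x \<bullet> y = x \<bullet> f y" and S: "subspace S"
    and x0: "x0 \<in> S" "norm x0 = 1"
    and bound: "\<And>z. z \<in> S \<Longrightarrow> z \<bullet> f z \<le> (x0 \<bullet> f x0) * (z \<bullet> z)"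
    and y: "y \<in> S" "x0 \<bullet> y = 0"
  shows "y \<bullet> f x0 = 0"
proof (rule linear_le_quadratic_imp_zero)
  interpret linear f by (fact lin)
  fix t :: real
  have "x0 + t *\<^sub>R y \<in> S" using S x0(1) y(1) by (simp add: subspace_add subspace_scale)
  then have "(x0 + t *\<^sub>R y) \<bullet> f (x0 + t *\<^sub>R y) \<le> (x0 \<bullet> f x0) * ((x0 + t *\<^sub>R y) \<bullet> (x0 + t *\<^sub>R y))"
    by (rule bound)
  moreover have "x0 \<bullet> x0 = 1" using x0(2) by (simp add: norm_eq_1)
  ultimately show "2 * t * (y \<bullet> f x0) \<le> t\<^sup>2 * ((x0 \<bullet> f x0) * (y \<bullet> y) - y \<bullet> f y)"
    using adj[of x0 y] y(2)
    by (simp add: add scale inner_add_left inner_add_right inner_commute power2_eq_square algebra_simps)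
qed

lemma quadratic_form_attains_max_on_subspace:
  fixes f :: "'a::euclidean_space \<Rightarrow> 'a"
  assumes lin: "linear f" and S: "subspace S" "S \<noteq> {0}"
  obtains x0 where "x0 \<in> S" "norm x0 = 1" "\<And>z. z \<in> S \<Longrightarrow> z \<bullet> f z \<le> (x0 \<bullet> f x0) * (z \<bullet> z)"
proof -
  interpret linear f by (fact lin)
  let ?q = "\<lambda>x. x \<bullet> f x"
  let ?K = "sphere 0 1 \<inter> S"
  obtain s where s: "s \<in> S" "s \<noteq> 0" using S subspace_0 by blast
  have "s /\<^sub>R norm s \<in> ?K" using s S(1) by (auto simp: subspace_scale)
  moreover have "compact ?K" by (intro compact_Int_closed compact_sphere closed_subspace S)
  moreover have "continuous_on ?K ?q"
    using lin by (intro continuous_intros linear_continuous_on) (simp add: linear_conv_bounded_linear)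
  ultimately obtain x0 where x0: "x0 \<in> ?K" "\<And>y. y \<in> ?K \<Longrightarrow> ?q y \<le> ?q x0"
    using continuous_attains_sup[of ?K ?q] by blast
  have "?q z \<le> ?q x0 * (z \<bullet> z)" if "z \<in> S" for z
  proof (cases "z = 0")
    case False
    then have "?q (z /\<^sub>R norm z) \<le> ?q x0" using that S(1) by (intro x0(2)) (simp add: subspace_scale)
    then show ?thesis using False by (simp add: scale field_simps power2_eq_square dot_square_norm)
  qed (simp add: zero)
  with x0(1) that show ?thesis by auto
qed

lemma span_insert_unit_complement:
  assumes S: "subspace S" and x0: "x0 \<in> S" "norm x0 = 1"
    and B: "span B = S \<inter> {y. x0 \<bullet> y = 0}"
  shows "span (insert x0 B) = S"
proof
  have "B \<subseteq> S" using B span_superset by blast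
  then show "span (insert x0 B) \<subseteq> S" using S x0(1) by (intro span_minimal) auto
  show "S \<subseteq> span (insert x0 B)"
  proof
    fix z assume "z \<in> S"
    then have "z - (x0 \<bullet> z) *\<^sub>R x0 \<in> span B"
      using S x0 B by (simp add: subspace_diff subspace_scale inner_diff_right norm_eq_1)
    then have "z - (x0 \<bullet> z) *\<^sub>R x0 + (x0 \<bullet> z) *\<^sub>R x0 \<in> span (insert x0 B)"
      by (meson span_add span_base span_mono span_scale insertI1 subset_insertI subsetD)
    then show "z \<in> span (insert x0 B)" by simp
  qed
qed

lemma self_adjoint_orthonormal_basis_of_subspace:
  fixes f :: "'a::euclidean_space \<Rightarrow> 'a"
  assumes lin: "linear f" and adj: "\<And>x y. f x \<bullet> y = x \<bullet> f y" and "subspace S"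
  shows "\<exists>B. B \<subseteq> S \<and> pairwise orthogonal B \<and> (\<forall>x\<in>B. norm x = 1) \<and> span B = S
           \<and> (\<forall>x\<in>B. \<forall>y\<in>B. x \<noteq> y \<longrightarrow> x \<bullet> f y = 0)"
  using \<open>subspace S\<close>
proof (induction "dim S" arbitrary: S rule: less_induct)
  case less
  show ?case
  proof (cases "S = {0}")
    case True
    then show ?thesis by (intro exI[of _ "{}"]) auto
  next
    case False
    obtain x0 where x0: "x0 \<in> S" "norm x0 = 1" "\<And>z. z \<in> S \<Longrightarrow> z \<bullet> f z \<le> (x0 \<bullet> f x0) * (z \<bullet> z)"
      using quadratic_form_attains_max_on_subspace[OF lin less.prems False] by blast
    define S' where "S' = S \<inter> {y. x0 \<bullet> y = 0}"
    have "subspace S'"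
      unfolding S'_def by (intro subspace_inter less.prems subspace_hyperplane)
    have "x0 \<notin> S'" using x0(2) by (simp add: S'_def norm_eq_1)
    then have "S' \<subset> S" using x0(1) unfolding S'_def by blast
    moreover have "span S' = S'" "span S = S"
      using \<open>subspace S'\<close> less.prems by (simp_all only: span_eq_iff)
    ultimately have "dim S' < dim S" by (simp only: dim_psubset)
    then obtain B' where B': "B' \<subseteq> S'" "pairwise orthogonal B'" "\<forall>x\<in>B'. norm x = 1"
      "span B' = S'" "\<forall>x\<in>B'. \<forall>y\<in>B'. x \<noteq> y \<longrightarrow> x \<bullet> f y = 0"
      using less.hyps[OF _ \<open>subspace S'\<close>] by blast
    have x0_orth: "y \<bullet> f x0 = 0" if "y \<in> S'" for y
      using self_adjoint_maximizer_orthogonal[OF lin adj less.prems x0] that by (simp add: S'_def)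
    have "span (insert x0 B') = S"
      using B'(4) unfolding S'_def by (rule span_insert_unit_complement[OF less.prems x0(1,2)])
    moreover have "pairwise orthogonal (insert x0 B')"
      using B'(1,2) by (auto simp: pairwise_insert orthogonal_def inner_commute S'_def)
    moreover have "x \<bullet> f y = 0" if "x \<in> insert x0 B'" "y \<in> insert x0 B'" "x \<noteq> y" for x y
      using that B'(1,5) x0_orth[of x] x0_orth[of y] adj[of x0 y] by (auto simp: inner_commute)
    ultimately show ?thesis
      using B'(1,3) x0(1,2) by (intro exI[of _ "insert x0 B'"]) (auto simp: S'_def)
  qed
qed

section \<open>Matrices of tensors\<close>

definition tensor_matrix :: "nat set \<Rightarrow> (nat \<Rightarrow> real^'n) \<Rightarrow> (nat \<Rightarrow> nat \<Rightarrow> real) \<Rightarrow> real^'n^'n" where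
  "tensor_matrix I e D = (\<Sum>i\<in>I. \<Sum>j\<in>I. D i j *\<^sub>R tprod (e i) (e j))"

lemma tprod_mult_vec: "tprod x y *v v = (y \<bullet> v) *\<^sub>R x"
  by (simp add: vec_eq_iff matrix_vector_mult_def tprod_def inner_vec_def
      sum_distrib_left mult_ac)

lemma sum_matrix_mult_vec: "finite I \<Longrightarrow> (\<Sum>i\<in>I. A i) *v v = (\<Sum>i\<in>I. A i *v v)"
  by (induction I rule: finite_induct) (auto simp: matrix_vector_mult_add_rdistrib)

lemma tensor_matrix_mult_vec:
  assumes "finite I"
  shows "tensor_matrix I e D *v v = (\<Sum>i\<in>I. \<Sum>j\<in>I. (D i j * (e j \<bullet> v)) *\<^sub>R e i)"
  using assms
  by (simp add: tensor_matrix_def sum_matrix_mult_vec scaleR_matrix_vector_assoc[symmetric] tprod_mult_vec)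

lemma inner_tensor_matrix:
  assumes "finite I"
  shows "w \<bullet> (tensor_matrix I e D *v v) = (\<Sum>i\<in>I. \<Sum>j\<in>I. (w \<bullet> e i) * D i j * (e j \<bullet> v))"
  using assms by (simp add: tensor_matrix_mult_vec inner_sum_right mult_ac)

lemma tensor_matrix_symmetric:
  assumes "finite I" "\<forall>i\<in>I. \<forall>j\<in>I. D i j = D j i"
  shows "(tensor_matrix I e D *v v) \<bullet> w = v \<bullet> (tensor_matrix I e D *v w)"
  unfolding inner_commute[of _ w] inner_tensor_matrix[OF assms(1)]
  using assms(2) by (subst sum.swap) (auto intro!: sum.cong simp: inner_commute mult_ac)

lemma tensor_matrix_pos_def:
  fixes e :: "nat \<Rightarrow> real^'n"
  assumes "finite I" "span (e ` I) = UNIV"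
    and pd: "\<forall>\<xi>. (\<exists>i\<in>I. \<xi> i \<noteq> 0) \<longrightarrow> (\<Sum>i\<in>I. \<Sum>j\<in>I. \<xi> i * D i j * \<xi> j) > 0"
    and "v \<noteq> 0"
  shows "v \<bullet> (tensor_matrix I e D *v v) > 0"
proof -
  have "\<exists>i\<in>I. e i \<bullet> v \<noteq> 0"
  proof (rule ccontr)
    assume "\<not> ?thesis"
    then have "orthogonal v v"
      using assms(2) by (intro orthogonal_to_span[of v "e ` I"]) (auto simp: orthogonal_def inner_commute)
    with \<open>v \<noteq> 0\<close> show False by (simp add: orthogonal_def)
  qed
  then show ?thesis
    using pd[rule_format, of "\<lambda>i. e i \<bullet> v"]
    by (simp add: inner_tensor_matrix[OF assms(1)] inner_commute)
qed

lemma pos_def_diagonal_pos: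
  fixes D :: "nat \<Rightarrow> nat \<Rightarrow> real"
  assumes pd: "\<forall>\<xi>. (\<exists>i\<in>I. \<xi> i \<noteq> 0) \<longrightarrow> (\<Sum>i\<in>I. \<Sum>j\<in>I. \<xi> i * D i j * \<xi> j) > 0"
    and "finite I" "k \<in> I"
  shows "0 < D k k"
proof -
  have "0 < (\<Sum>i\<in>I. \<Sum>j\<in>I. (if i = k then 1 else 0) * D i j * (if j = k then 1 else 0))"
    using \<open>k \<in> I\<close> by (intro pd[rule_format]) auto
  then show ?thesis using assms(2,3) by (simp add: delta_mult_simps)
qed

lemma tensor_matrix_diagonal_mult_vec:
  assumes "finite I"
  shows "tensor_matrix I b (\<lambda>i j. c i * (if i = j then 1 else 0)) *v v = (\<Sum>i\<in>I. (c i * (b i \<bullet> v)) *\<^sub>R b i)"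
  using assms by (simp add: tensor_matrix_mult_vec delta_mult_simps)

lemma tensor_matrix_coeff:
  assumes "finite I" "p \<in> I" "q \<in> I"
    and dual: "\<And>a j. a \<in> I \<Longrightarrow> j \<in> I \<Longrightarrow> f a \<bullet> e j = (if a = j then 1 else 0)"
  shows "f p \<bullet> (tensor_matrix I e D *v f q) = D p q"
  using assms by (simp add: inner_tensor_matrix dual inner_commute[of "e _"] delta_mult_simps)

lemma pos_def_matrix_inverse:
  fixes T :: "real^'n^'n"
  assumes sym: "\<And>x y. (T *v x) \<bullet> y = x \<bullet> (T *v y)" and pd: "\<And>v. v \<noteq> 0 \<Longrightarrow> 0 < v \<bullet> (T *v v)"
  obtains Ti where "\<And>v. T *v (Ti *v v) = v" "\<And>v. Ti *v (T *v v) = v"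
    "\<And>x y. (Ti *v x) \<bullet> y = x \<bullet> (Ti *v y)" "\<And>v. v \<noteq> 0 \<Longrightarrow> 0 < v \<bullet> (Ti *v v)"
proof -
  have "inj ((*v) T)" unfolding vec.inj_iff_eq_0 using pd by force
  then obtain Ti where left: "Ti ** T = mat 1" using matrix_left_invertible_injective by blast
  then have right: "T ** Ti = mat 1" using matrix_left_right_inverse by blast
  have T_Ti: "T *v (Ti *v v) = v" and Ti_T: "Ti *v (T *v v) = v" for v
    using left right by (simp_all add: matrix_vector_mul_assoc)
  show thesis
  proof (rule that[OF T_Ti Ti_T])
    show "(Ti *v x) \<bullet> y = x \<bullet> (Ti *v y)" for x y
      using sym[of "Ti *v x" "Ti *v y"] by (simp add: T_Ti inner_commute)
    show "0 < v \<bullet> (Ti *v v)" if "v \<noteq> 0" for v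
    proof -
      have "Ti *v v \<noteq> 0" using that T_Ti[of v] by (metis matrix_vector_mult_0_right)
      then show ?thesis using pd[of "Ti *v v"] by (simp add: T_Ti inner_commute)
    qed
  qed
qed

lemma matrix_eq_tensor_matrix_inverse_orthogonal:
  fixes T Ti :: "real^'n^'n"
  assumes "finite I" "span (b ` I) = UNIV"
    and T_Ti: "\<And>v. T *v (Ti *v v) = v" and Ti_T: "\<And>v. Ti *v (T *v v) = v"
    and orth: "\<And>i j. i \<in> I \<Longrightarrow> j \<in> I \<Longrightarrow> i \<noteq> j \<Longrightarrow> b i \<bullet> (Ti *v b j) = 0"
    and nonzero: "\<And>i. i \<in> I \<Longrightarrow> b i \<bullet> (Ti *v b i) \<noteq> 0"
  shows "T = tensor_matrix I b (\<lambda>i j. 1 / (b i \<bullet> (Ti *v b i)) * (if i = j then 1 else 0))"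
    (is "T = ?R")
proof -
  have "T *v w = ?R *v w" if "w \<in> (*v) Ti ` b ` I" for w
  proof -
    obtain j where j: "j \<in> I" and w: "w = Ti *v b j" using \<open>w \<in> _\<close> by blast
    have "?R *v w = (\<Sum>i\<in>I. (1 / (b i \<bullet> (Ti *v b i)) * (b i \<bullet> (Ti *v b j))) *\<^sub>R b i)"
      unfolding w using assms(1) by (rule tensor_matrix_diagonal_mult_vec)
    also have "\<dots> = (\<Sum>i\<in>I. if i = j then b j else 0)"
      using j orth nonzero by (intro sum.cong) auto
    also have "\<dots> = b j" using j assms(1) by simp
    finally show ?thesis using w T_Ti by simp
  qed
  moreover have "span ((*v) Ti ` b ` I) = UNIV"
  proof -
    have "span ((*v) Ti ` b ` I) = (*v) Ti ` span (b ` I)"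
      by (rule linear_span_image[OF matrix_vector_mul_linear])
    also have "\<dots> = UNIV" using assms(2) Ti_T by (metis surj_def)
    finally show ?thesis .
  qed
  ultimately have "T *v v = ?R *v v" for v
    using real_vector.linear_eq_on_span[OF matrix_vector_mul_linear matrix_vector_mul_linear] by blast
  then show ?thesis by (simp add: matrix_eq)
qed

section \<open>Bases indexed by \<open>{1..M}\<close>\<close>

lemma is_basis_dual:
  fixes e :: "nat \<Rightarrow> real^'n"
  assumes "is_basis M e"
  obtains f where "\<And>a j. a \<in> {1..M} \<Longrightarrow> j \<in> {1..M} \<Longrightarrow> f a \<bullet> e j = (if a = j then 1 else 0)"
proof
  define E where "E = e ` {1..M}"
  have inj: "inj_on e {1..M}" and ind: "independent E" and sp: "span E = UNIV"
    using assms by (auto simp: is_basis_def E_def)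
  define g where "g a v = representation E v (e a)" for a v
  have "linear (g a)" for a
    by (intro linearI)
      (simp_all add: g_def sp real_vector.representation_add[OF ind] real_vector.representation_scale[OF ind])
  fix a j assume "a \<in> {1..M}" "j \<in> {1..M}"
  then have "adjoint (g a) 1 \<bullet> e j = representation E (e j) (e a)"
    using adjoint_works[OF \<open>linear (g a)\<close>, of "e j" 1] by (simp add: g_def inner_commute)
  also have "\<dots> = (if a = j then 1 else 0)"
  proof -
    have "e j \<in> E" using \<open>j \<in> {1..M}\<close> by (simp add: E_def)
    then show ?thesis
      using \<open>a \<in> {1..M}\<close> \<open>j \<in> {1..M}\<close> inj_onD[OF inj]
      by (auto simp: real_vector.representation_basis[OF ind])
  qed
  finally show "adjoint (g a) 1 \<bullet> e j = (if a = j then 1 else 0)" .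
qed

lemma is_basis_expansion:
  fixes e :: "nat \<Rightarrow> real^'n"
  assumes "is_basis M e"
    and dual: "\<And>a j. a \<in> {1..M} \<Longrightarrow> j \<in> {1..M} \<Longrightarrow> f a \<bullet> e j = (if a = j then 1 else 0)"
  shows "r = (\<Sum>j\<in>{1..M}. (f j \<bullet> r) *\<^sub>R e j)"
proof -
  have inj: "inj_on e {1..M}" and "r \<in> span (e ` {1..M})" using assms by (auto simp: is_basis_def)
  then obtain u where "r = (\<Sum>v\<in>e ` {1..M}. u v *\<^sub>R v)" by (auto simp: span_finite)
  also have "\<dots> = (\<Sum>j\<in>{1..M}. u (e j) *\<^sub>R e j)" by (rule sum.reindex[OF inj, unfolded comp_def])
  finally have r: "r = (\<Sum>j\<in>{1..M}. u (e j) *\<^sub>R e j)" .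
  then have "f a \<bullet> r = u (e a)" if "a \<in> {1..M}" for a
    using that by (simp add: inner_sum_right dual delta_mult_simps)
  then show ?thesis by (subst r) (auto intro: sum.cong)
qed

lemma is_basis_orthonormal_insert:
  fixes b :: "nat \<Rightarrow> real^'n"
  assumes "M = CARD('n)"
    and orth: "\<forall>\<alpha>\<in>{1..M-1}. \<forall>\<beta>\<in>{1..M-1}. b \<alpha> \<bullet> b \<beta> = (if \<alpha> = \<beta> then 1 else 0)"
    and last: "b M \<notin> span (b ` {1..M-1})"
  shows "is_basis M b"
proof -
  have "0 < M" using assms(1) by simp
  then have M_split: "{1..M} = insert M {1..M-1}" "M \<notin> {1..M-1}" by auto
  have unit: "b \<alpha> \<bullet> b \<alpha> = 1" if "\<alpha> \<in> {1..M-1}" for \<alpha> using orth that by simp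
  have "inj_on b {1..M-1}"
  proof (rule inj_onI)
    fix x y assume xy: "x \<in> {1..M-1}" "y \<in> {1..M-1}" "b x = b y"
    then have "b x \<bullet> b y = 1" using unit[OF xy(2)] by simp
    with orth xy(1,2) show "x = y" by (metis zero_neq_one)
  qed
  moreover have "b M \<notin> b ` {1..M-1}" using last span_base by metis
  ultimately have inj: "inj_on b {1..M}" unfolding M_split(1) using M_split(2) by simp
  have "pairwise orthogonal (b ` {1..M-1})"
    using orth by (auto simp: pairwise_def orthogonal_def)
  moreover have "0 \<notin> b ` {1..M-1}" using unit by force
  ultimately have "independent (b ` {1..M-1})" by (rule pairwise_orthogonal_independent)
  then have ind: "independent (b ` {1..M})"
    using last unfolding M_split(1) by (simp add: independent_insert)
  moreover have "card (b ` {1..M}) = DIM(real^'n)" using card_image[OF inj] assms(1) by simp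
  ultimately have "UNIV \<subseteq> span (b ` {1..M})"
    by (intro card_ge_dim_independent) (auto simp: dim_UNIV)
  with inj ind show ?thesis by (auto simp: is_basis_def)
qed

lemma orthonormal_change_of_coefficients:
  fixes b e :: "nat \<Rightarrow> 'a::real_inner"
  assumes "finite J" "\<alpha> \<in> J"
    and orth: "\<forall>\<alpha>\<in>J. \<forall>\<beta>\<in>J. b \<alpha> \<bullet> b \<beta> = (if \<alpha> = \<beta> then 1 else 0)"
    and u: "\<forall>\<alpha>\<in>J. e \<alpha> = (\<Sum>\<beta>\<in>J. u \<beta> \<alpha> *\<^sub>R b \<beta>)"
    and eq: "(\<Sum>\<gamma>\<in>J. y \<gamma> *\<^sub>R e \<gamma>) = (\<Sum>\<gamma>\<in>J. \<zeta> \<gamma> *\<^sub>R b \<gamma>)"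
  shows "\<zeta> \<alpha> = (\<Sum>\<gamma>\<in>J. u \<alpha> \<gamma> * y \<gamma>)"
proof -
  have "(\<Sum>\<gamma>\<in>J. \<zeta> \<gamma> *\<^sub>R b \<gamma>) \<bullet> b \<alpha> = \<zeta> \<alpha>"
    using assms(1,2) orth by (simp add: inner_sum_left delta_mult_simps)
  moreover have "(\<Sum>\<gamma>\<in>J. y \<gamma> *\<^sub>R e \<gamma>) \<bullet> b \<alpha> = (\<Sum>\<gamma>\<in>J. u \<alpha> \<gamma> * y \<gamma>)"
    using assms(1,2) orth u by (simp add: inner_sum_left delta_mult_simps mult.commute cong: sum.cong)
  ultimately show ?thesis using eq by simp
qed

lemma left_inverse_coefficients:
  assumes "finite J" "\<alpha> \<in> J"
    and inv: "\<forall>\<alpha>\<in>J. \<forall>\<beta>\<in>J. (\<Sum>\<gamma>\<in>J. ub \<alpha> \<gamma> * u \<gamma> \<beta>) = (if \<alpha> = \<beta> then 1 else 0)"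
    and \<zeta>: "\<forall>\<alpha>\<in>J. \<zeta> \<alpha> = (\<Sum>\<gamma>\<in>J. u \<alpha> \<gamma> * y \<gamma>)"
  shows "(\<Sum>\<gamma>\<in>J. ub \<alpha> \<gamma> * \<zeta> \<gamma>) = (y \<alpha> :: real)"
proof -
  have "(\<Sum>\<gamma>\<in>J. ub \<alpha> \<gamma> * \<zeta> \<gamma>) = (\<Sum>\<gamma>\<in>J. \<Sum>\<delta>\<in>J. ub \<alpha> \<gamma> * u \<gamma> \<delta> * y \<delta>)"
    using \<zeta> by (simp add: sum_distrib_left mult.assoc)
  also have "\<dots> = (\<Sum>\<delta>\<in>J. (\<Sum>\<gamma>\<in>J. ub \<alpha> \<gamma> * u \<gamma> \<delta>) * y \<delta>)"
    by (subst sum.swap) (simp add: sum_distrib_right)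
  also have "\<dots> = y \<alpha>" using assms(1,2) inv by (simp add: delta_mult_simps)
  finally show ?thesis .
qed

section \<open>The diagonalizing basis adapted to a hyperplane\<close>

lemma hyperplane_orthonormal_basis_diagonalizing:
  fixes Q :: "real^'n^'n" and n :: "real^'n"
  assumes "M = CARD('n)" "n \<noteq> 0" and sym: "\<And>x y. (Q *v x) \<bullet> y = x \<bullet> (Q *v y)"
  obtains h where "\<forall>\<alpha>\<in>{1..M-1}. \<forall>\<beta>\<in>{1..M-1}. h \<alpha> \<bullet> h \<beta> = (if \<alpha> = \<beta> then 1 else 0)"
    "\<forall>\<alpha>\<in>{1..M-1}. h \<alpha> \<bullet> n = 0" "span (h ` {1..M-1}) = {r. r \<bullet> n = 0}"
    "\<forall>\<alpha>\<in>{1..M-1}. \<forall>\<beta>\<in>{1..M-1}. \<alpha> \<noteq> \<beta> \<longrightarrow> h \<alpha> \<bullet> (Q *v h \<beta>) = 0"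
proof -
  have "subspace {r. r \<bullet> n = 0}" by (rule subspace_hyperplane2)
  note self_adjoint_orthonormal_basis_of_subspace[OF matrix_vector_mul_linear sym this]
  then obtain B where B: "B \<subseteq> {r. r \<bullet> n = 0}" "pairwise orthogonal B" "\<forall>x\<in>B. norm x = 1"
      "span B = {r. r \<bullet> n = 0}" "\<forall>x\<in>B. \<forall>y\<in>B. x \<noteq> y \<longrightarrow> x \<bullet> (Q *v y) = 0"
    by blast
  have "independent B"
    using B(2,3) by (intro pairwise_orthogonal_independent) auto
  then have "card B = dim {r. r \<bullet> n = 0}"
    using B(4) dim_eq_card_independent dim_span by metis
  also have "\<dots> = M - 1"
    using dim_hyperplane[OF \<open>n \<noteq> 0\<close>] assms(1) by (simp add: inner_commute)
  finally obtain h where h: "bij_betw h {1..M-1} B"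
    using finite_same_card_bij[of "{1..M-1}" B] finiteI_independent[OF \<open>independent B\<close>] by auto
  have h_inj: "h \<alpha> = h \<beta> \<longleftrightarrow> \<alpha> = \<beta>" and h_B: "h \<alpha> \<in> B" if "\<alpha> \<in> {1..M-1}" "\<beta> \<in> {1..M-1}" for \<alpha> \<beta>
    using h that by (auto simp: bij_betw_def inj_on_eq_iff)
  show thesis
  proof (rule that)
    show "\<forall>\<alpha>\<in>{1..M-1}. \<forall>\<beta>\<in>{1..M-1}. h \<alpha> \<bullet> h \<beta> = (if \<alpha> = \<beta> then 1 else 0)"
      using h_inj h_B B(2,3) by (auto simp: pairwise_def orthogonal_def norm_eq_1)
    show "\<forall>\<alpha>\<in>{1..M-1}. h \<alpha> \<bullet> n = 0" using h_B B(1) by blast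
    show "span (h ` {1..M-1}) = {r. r \<bullet> n = 0}" using h B(4) by (simp add: bij_betw_def)
    show "\<forall>\<alpha>\<in>{1..M-1}. \<forall>\<beta>\<in>{1..M-1}. \<alpha> \<noteq> \<beta> \<longrightarrow> h \<alpha> \<bullet> (Q *v h \<beta>) = 0"
      using h_inj h_B B(5) by blast
  qed
qed

lemma hyperplane_adapted_inverse_orthogonal_basis:
  fixes T Ti :: "real^'n^'n" and n :: "real^'n"
  assumes M: "M = CARD('n)" and Ti_T: "\<And>v. Ti *v (T *v v) = v"
    and Ti_sym: "\<And>x y. (Ti *v x) \<bullet> y = x \<bullet> (Ti *v y)"
    and n: "norm n = 1" and n_T_n: "0 < n \<bullet> (T *v n)"
  obtains b where "is_basis M b"
    "\<forall>\<alpha>\<in>{1..M-1}. \<forall>\<beta>\<in>{1..M-1}. b \<alpha> \<bullet> b \<beta> = (if \<alpha> = \<beta> then 1 else 0)"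
    "\<forall>\<alpha>\<in>{1..M-1}. b \<alpha> \<bullet> n = 0" "span (b ` {1..M-1}) = {r. r \<bullet> n = 0}"
    "b M = (1 / norm (T *v n)) *\<^sub>R (T *v n)"
    "\<And>i j. i \<in> {1..M} \<Longrightarrow> j \<in> {1..M} \<Longrightarrow> i \<noteq> j \<Longrightarrow> b i \<bullet> (Ti *v b j) = 0"
proof -
  have "n \<noteq> 0" using n by auto
  obtain h where h_orth: "\<forall>\<alpha>\<in>{1..M-1}. \<forall>\<beta>\<in>{1..M-1}. h \<alpha> \<bullet> h \<beta> = (if \<alpha> = \<beta> then 1 else 0)"
    and h_n: "\<forall>\<alpha>\<in>{1..M-1}. h \<alpha> \<bullet> n = 0" and h_span: "span (h ` {1..M-1}) = {r. r \<bullet> n = 0}"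
    and h_Ti: "\<forall>\<alpha>\<in>{1..M-1}. \<forall>\<beta>\<in>{1..M-1}. \<alpha> \<noteq> \<beta> \<longrightarrow> h \<alpha> \<bullet> (Ti *v h \<beta>) = 0"
    using hyperplane_orthonormal_basis_diagonalizing[OF M \<open>n \<noteq> 0\<close> Ti_sym] by blast
  define b where "b = h(M := (1 / norm (T *v n)) *\<^sub>R (T *v n))"
  have "M \<notin> {1..M-1}" by auto
  then have b_h: "b \<alpha> = h \<alpha>" if "\<alpha> \<in> {1..M-1}" for \<alpha> using that by (auto simp: b_def)
  have b_orth: "\<forall>\<alpha>\<in>{1..M-1}. \<forall>\<beta>\<in>{1..M-1}. b \<alpha> \<bullet> b \<beta> = (if \<alpha> = \<beta> then 1 else 0)"
    using h_orth b_h by simp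
  have b_n: "\<forall>\<alpha>\<in>{1..M-1}. b \<alpha> \<bullet> n = 0" using h_n b_h by simp
  have "b ` {1..M-1} = h ` {1..M-1}" using b_h by (rule image_cong[OF refl])
  then have b_span: "span (b ` {1..M-1}) = {r. r \<bullet> n = 0}" using h_span by simp
  have "T *v n \<noteq> 0" using n_T_n by auto
  then have "b M \<bullet> n \<noteq> 0" using n_T_n by (simp add: b_def inner_commute)
  then have "b M \<notin> span (b ` {1..M-1})" using b_span by simp
  then have b_basis: "is_basis M b" by (rule is_basis_orthonormal_insert[OF M b_orth])
  have Ti_b_last: "Ti *v b M = (1 / norm (T *v n)) *\<^sub>R n" by (simp add: b_def matrix_vector_mult_scaleR Ti_T)
  have b_Ti: "b i \<bullet> (Ti *v b j) = 0" if ij: "i \<in> {1..M}" "j \<in> {1..M}" "i \<noteq> j" for i j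
  proof -
    consider "i \<in> {1..M-1}" "j = M" | "i = M" "j \<in> {1..M-1}" | "i \<in> {1..M-1}" "j \<in> {1..M-1}"
      using ij by (cases "i = M"; cases "j = M") auto
    then show ?thesis
      using ij(3) h_Ti b_h b_n Ti_b_last Ti_sym[of "b M" "b j"] by cases (auto simp: inner_commute)
  qed
  have "b M = (1 / norm (T *v n)) *\<^sub>R (T *v n)" by (simp add: b_def)
  from that[OF b_basis b_orth b_n b_span this b_Ti] show thesis .
qed

lemma hyperplane_adapted_diagonalizing_basis:
  fixes T :: "real^'n^'n" and n :: "real^'n"
  assumes M: "M = CARD('n)"
    and sym: "\<And>x y. (T *v x) \<bullet> y = x \<bullet> (T *v y)" and pd: "\<And>v. v \<noteq> 0 \<Longrightarrow> 0 < v \<bullet> (T *v v)"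
    and n: "norm n = 1"
  obtains b Dc where "is_basis M b"
    "\<forall>\<alpha>\<in>{1..M-1}. \<forall>\<beta>\<in>{1..M-1}. b \<alpha> \<bullet> b \<beta> = (if \<alpha> = \<beta> then 1 else 0)"
    "\<forall>\<alpha>\<in>{1..M-1}. b \<alpha> \<bullet> n = 0" "span (b ` {1..M-1}) = {r. r \<bullet> n = 0}"
    "b M = (1 / norm (T *v n)) *\<^sub>R (T *v n)" "norm (b M) = 1" "0 < b M \<bullet> n"
    "\<forall>i\<in>{1..M}. 0 < Dc i"
    "T = tensor_matrix {1..M} b (\<lambda>i j. Dc i * (if i = j then 1 else 0))"
    "Dc M = (norm (T *v n))\<^sup>2 / (n \<bullet> (T *v n))"
proof -
  obtain Ti where T_Ti: "\<And>v. T *v (Ti *v v) = v" and Ti_T: "\<And>v. Ti *v (T *v v) = v"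
    and Ti_sym: "\<And>x y. (Ti *v x) \<bullet> y = x \<bullet> (Ti *v y)" and Ti_pd: "\<And>v. v \<noteq> 0 \<Longrightarrow> 0 < v \<bullet> (Ti *v v)"
    using pos_def_matrix_inverse[OF sym pd] by blast
  have "n \<noteq> 0" using n by auto
  then have n_T_n: "0 < n \<bullet> (T *v n)" by (rule pd)
  define \<omega> where "\<omega> = norm (T *v n)"
  have "0 < \<omega>" using n_T_n by (auto simp: \<omega>_def)
  obtain b where b_basis: "is_basis M b"
    and b_orth: "\<forall>\<alpha>\<in>{1..M-1}. \<forall>\<beta>\<in>{1..M-1}. b \<alpha> \<bullet> b \<beta> = (if \<alpha> = \<beta> then 1 else 0)"
    and b_n: "\<forall>\<alpha>\<in>{1..M-1}. b \<alpha> \<bullet> n = 0" and b_span: "span (b ` {1..M-1}) = {r. r \<bullet> n = 0}"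
    and b_last: "b M = (1 / \<omega>) *\<^sub>R (T *v n)"
    and b_Ti: "\<And>i j. i \<in> {1..M} \<Longrightarrow> j \<in> {1..M} \<Longrightarrow> i \<noteq> j \<Longrightarrow> b i \<bullet> (Ti *v b j) = 0"
    using hyperplane_adapted_inverse_orthogonal_basis[OF M Ti_T Ti_sym n n_T_n] unfolding \<omega>_def by blast
  define Dc where "Dc i = 1 / (b i \<bullet> (Ti *v b i))" for i
  have Ti_b_pos: "0 < b i \<bullet> (Ti *v b i)" if "i \<in> {1..M}" for i
  proof (rule Ti_pd)
    have "independent (b ` {1..M})" "b i \<in> b ` {1..M}" using b_basis that by (auto simp: is_basis_def)
    then show "b i \<noteq> 0" using real_vector.dependent_zero by metis
  qed
  have b_last_n: "b M \<bullet> n = (n \<bullet> (T *v n)) / \<omega>" by (simp add: b_last inner_commute)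
  show thesis
  proof (rule that[OF b_basis b_orth b_n b_span])
    show "b M = (1 / norm (T *v n)) *\<^sub>R (T *v n)" using b_last by (simp add: \<omega>_def)
    show "norm (b M) = 1" using \<open>0 < \<omega>\<close> by (simp add: b_last \<omega>_def)
    show "0 < b M \<bullet> n" using b_last_n n_T_n \<open>0 < \<omega>\<close> by simp
    show "\<forall>i\<in>{1..M}. 0 < Dc i" using Ti_b_pos by (simp add: Dc_def)
    show "T = tensor_matrix {1..M} b (\<lambda>i j. Dc i * (if i = j then 1 else 0))"
      unfolding Dc_def
    proof (rule matrix_eq_tensor_matrix_inverse_orthogonal[OF finite_atLeastAtMost _ T_Ti Ti_T b_Ti])
      show "span (b ` {1..M}) = UNIV" using b_basis by (simp add: is_basis_def)
      show "b i \<bullet> (Ti *v b i) \<noteq> 0" if "i \<in> {1..M}" for i using Ti_b_pos[OF that] by simp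
    qed
    have "b M \<bullet> (Ti *v b M) = (n \<bullet> (T *v n)) / \<omega>\<^sup>2"
      using b_last_n by (simp add: b_last matrix_vector_mult_scaleR Ti_T power2_eq_square)
    then show "Dc M = (norm (T *v n))\<^sup>2 / (n \<bullet> (T *v n))" by (simp add: Dc_def \<omega>_def)
  qed
qed

section \<open>Metric, mixed and covariant components\<close>

context
  fixes M :: nat and e :: "nat \<Rightarrow> real^'n" and D :: "nat \<Rightarrow> nat \<Rightarrow> real"
    and nc :: "nat \<Rightarrow> real" and nv :: "real^'n"
  assumes n_comp: "nv = (\<Sum>j\<in>{1..M}. nc j *\<^sub>R e j)"
begin

lemma Dmix_contraction: "(\<Sum>j\<in>{1..M}. Dmix M e D i j * nc j) = (\<Sum>j\<in>{1..M}. D i j * (e j \<bullet> nv))"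
proof -
  have "(\<Sum>j\<in>{1..M}. Dmix M e D i j * nc j) = (\<Sum>k\<in>{1..M}. \<Sum>j\<in>{1..M}. D i k * gmet e k j * nc j)"
    unfolding Dmix_def sum_distrib_right by (rule sum.swap)
  also have "\<dots> = (\<Sum>k\<in>{1..M}. D i k * (e k \<bullet> nv))"
    by (simp add: n_comp inner_sum_right gmet_def sum_distrib_left mult_ac)
  finally show ?thesis .
qed

lemma tensor_matrix_mult_normal:
  "tensor_matrix {1..M} e D *v nv = (\<Sum>i\<in>{1..M}. (\<Sum>j\<in>{1..M}. Dmix M e D i j * nc j) *\<^sub>R e i)"
  unfolding Dmix_contraction by (simp add: tensor_matrix_mult_vec scaleR_sum_left)

lemma omega_eq_norm: "omega M e D nc = norm (tensor_matrix {1..M} e D *v nv)"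
proof -
  let ?c = "\<lambda>i. \<Sum>j\<in>{1..M}. Dmix M e D i j * nc j"
  have "(tensor_matrix {1..M} e D *v nv) \<bullet> (tensor_matrix {1..M} e D *v nv)
      = (\<Sum>i\<in>{1..M}. \<Sum>j\<in>{1..M}. gmet e i j * ?c i * ?c j)"
    unfolding tensor_matrix_mult_normal
    by (simp add: inner_sum_left inner_sum_right gmet_def sum_distrib_left inner_commute mult_ac)
  also have "\<dots> = (\<Sum>i\<in>{1..M}. \<Sum>j\<in>{1..M}. \<Sum>p\<in>{1..M}. \<Sum>k\<in>{1..M}.
      gmet e i j * Dmix M e D i p * Dmix M e D j k * nc p * nc k)"
    by (simp add: sum_distrib_left sum_distrib_right mult_ac)
  finally show ?thesis by (simp add: omega_def norm_eq_sqrt_inner)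
qed

lemma sum_Dlow_eq_inner_normal:
  "(\<Sum>i\<in>{1..M}. \<Sum>j\<in>{1..M}. Dlow M e D i j * nc i * nc j) = nv \<bullet> (tensor_matrix {1..M} e D *v nv)"
proof -
  have Dlow: "Dlow M e D i j = e i \<bullet> (tensor_matrix {1..M} e D *v e j)" for i j
    by (simp add: Dlow_def inner_tensor_matrix gmet_def inner_commute mult_ac)
  have "nv \<bullet> (tensor_matrix {1..M} e D *v nv) = (\<Sum>j\<in>{1..M}. \<Sum>i\<in>{1..M}. Dlow M e D i j * nc i * nc j)"
    unfolding Dlow n_comp
    by (simp add: real_vector.linear_sum[OF matrix_vector_mul_linear] matrix_vector_mult_scaleR
        inner_sum_left inner_sum_right sum_distrib_left mult_ac)
  also have "\<dots> = (\<Sum>i\<in>{1..M}. \<Sum>j\<in>{1..M}. Dlow M e D i j * nc i * nc j)"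
    by (rule sum.swap)
  finally show ?thesis ..
qed

end

section \<open>Coordinates in adapted bases\<close>

locale adapted_bases =
  fixes M :: nat and e b :: "nat \<Rightarrow> real^'n" and n :: "real^'n"
    and D :: "nat \<Rightarrow> nat \<Rightarrow> real" and Dc :: "nat \<Rightarrow> real" and T :: "real^'n^'n" and \<omega> :: real
  assumes M_pos: "0 < M"
    and e_basis: "is_basis M e" and e_last: "e M = n" and e_tangent: "\<forall>\<alpha>\<in>{1..M-1}. e \<alpha> \<bullet> n = 0"
    and n_unit: "norm n = 1"
    and T_e: "T = tensor_matrix {1..M} e D"
    and T_b: "T = tensor_matrix {1..M} b (\<lambda>i j. Dc i * (if i = j then 1 else 0))"
    and b_orth: "\<forall>\<alpha>\<in>{1..M-1}. \<forall>\<beta>\<in>{1..M-1}. b \<alpha> \<bullet> b \<beta> = (if \<alpha> = \<beta> then 1 else 0)"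
    and b_tangent: "\<forall>\<alpha>\<in>{1..M-1}. b \<alpha> \<bullet> n = 0"
    and b_last: "b M = (1 / \<omega>) *\<^sub>R (T *v n)"
    and omega: "\<omega> = norm (T *v n)"
    and Dc_last: "Dc M = \<omega>\<^sup>2 / (n \<bullet> (T *v n))"
    and D_last_pos: "0 < D M M"
begin

lemma last_mem: "M \<in> {1..M}"
  using M_pos by simp

lemma e_inner_normal: "j \<in> {1..M} \<Longrightarrow> e j \<bullet> n = (if j = M then 1 else 0)"
  using e_last e_tangent n_unit by (auto simp: norm_eq_1)

lemma sum_inner_normal: "(\<Sum>j\<in>{1..M}. c j * (e j \<bullet> n)) = c M"
proof -
  have "(\<Sum>j\<in>{1..M}. c j * (e j \<bullet> n)) = (\<Sum>j\<in>{1..M}. if j = M then c j else 0)"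
    by (rule sum.cong) (simp_all add: e_inner_normal)
  also have "\<dots> = c M" using last_mem by simp
  finally show ?thesis .
qed

lemma T_normal: "T *v n = (\<Sum>i\<in>{1..M}. D i M *\<^sub>R e i)"
proof -
  have "T *v n = (\<Sum>i\<in>{1..M}. (\<Sum>j\<in>{1..M}. D i j * (e j \<bullet> n)) *\<^sub>R e i)"
    by (simp add: T_e tensor_matrix_mult_vec scaleR_sum_left)
  then show ?thesis by (simp only: sum_inner_normal)
qed

lemma T_normal_split: "T *v n = (\<Sum>\<gamma>\<in>{1..M-1}. D \<gamma> M *\<^sub>R e \<gamma>) + D M M *\<^sub>R n"
  unfolding T_normal sum_split_last[OF M_pos] e_last ..

lemma normal_T_normal: "n \<bullet> (T *v n) = D M M"
proof -
  have "n \<bullet> (T *v n) = (\<Sum>i\<in>{1..M}. D i M * (e i \<bullet> n))"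
    by (simp add: T_normal inner_sum_right inner_commute)
  then show ?thesis by (simp only: sum_inner_normal)
qed

lemma omega_pos: "0 < \<omega>"
  using normal_T_normal D_last_pos by (auto simp: omega)

lemma b_last_normal: "b M \<bullet> n = D M M / \<omega>"
  using normal_T_normal by (simp add: b_last inner_commute)

lemma adapted_coordinates:
  assumes u: "\<forall>\<alpha>\<in>{1..M-1}. e \<alpha> = (\<Sum>\<beta>\<in>{1..M-1}. u \<beta> \<alpha> *\<^sub>R b \<beta>)"
    and ub: "\<forall>\<alpha>\<in>{1..M-1}. \<forall>\<beta>\<in>{1..M-1}. (\<Sum>\<gamma>\<in>{1..M-1}. ub \<alpha> \<gamma> * u \<gamma> \<beta>) = (if \<alpha> = \<beta> then 1 else 0)"
    and r_e: "r = (\<Sum>\<gamma>\<in>{1..M-1}. x \<gamma> *\<^sub>R e \<gamma>) + x M *\<^sub>R n"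
    and r_b: "r = (\<Sum>\<gamma>\<in>{1..M-1}. \<zeta> \<gamma> *\<^sub>R b \<gamma>) + \<zeta> M *\<^sub>R b M"
  shows "(\<forall>\<alpha>\<in>{1..M-1}. \<zeta> \<alpha> = (\<Sum>\<gamma>\<in>{1..M-1}. u \<alpha> \<gamma> * (x \<gamma> - D \<gamma> M / D M M * x M)))
    \<and> \<zeta> M = \<omega> / D M M * x M
    \<and> (\<forall>\<alpha>\<in>{1..M-1}. x \<alpha> = (\<Sum>\<gamma>\<in>{1..M-1}. ub \<alpha> \<gamma> * \<zeta> \<gamma>) + D \<alpha> M / \<omega> * \<zeta> M)
    \<and> x M = D M M / \<omega> * \<zeta> M"
proof -
  define y where "y \<gamma> = x \<gamma> - D \<gamma> M / D M M * x M" for \<gamma>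
  have "r \<bullet> n = x M" using n_unit e_tangent by (simp add: r_e inner_add_left inner_sum_left norm_eq_1)
  moreover have "r \<bullet> n = \<zeta> M * (D M M / \<omega>)"
    using b_tangent by (simp add: r_b inner_add_left inner_sum_left b_last_normal)
  ultimately have x_last: "x M = D M M / \<omega> * \<zeta> M" and \<zeta>_last: "\<zeta> M = \<omega> / D M M * x M"
    using D_last_pos omega_pos by (simp_all add: field_simps)
  have normal_part: "\<zeta> M *\<^sub>R b M = (\<Sum>\<gamma>\<in>{1..M-1}. (D \<gamma> M / D M M * x M) *\<^sub>R e \<gamma>) + x M *\<^sub>R n"
    using \<zeta>_last omega_pos D_last_pos
    by (simp add: b_last T_normal_split scaleR_add_right scaleR_sum_right mult.commute)
  have "(\<Sum>\<gamma>\<in>{1..M-1}. y \<gamma> *\<^sub>R e \<gamma>)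
      = (\<Sum>\<gamma>\<in>{1..M-1}. x \<gamma> *\<^sub>R e \<gamma>) - (\<Sum>\<gamma>\<in>{1..M-1}. (D \<gamma> M / D M M * x M) *\<^sub>R e \<gamma>)"
    by (simp add: y_def scaleR_diff_left sum_subtractf)
  also have "\<dots> = r - \<zeta> M *\<^sub>R b M" by (simp add: r_e normal_part)
  also have "\<dots> = (\<Sum>\<gamma>\<in>{1..M-1}. \<zeta> \<gamma> *\<^sub>R b \<gamma>)" by (simp add: r_b)
  finally have tangent_part: "(\<Sum>\<gamma>\<in>{1..M-1}. y \<gamma> *\<^sub>R e \<gamma>) = (\<Sum>\<gamma>\<in>{1..M-1}. \<zeta> \<gamma> *\<^sub>R b \<gamma>)" .
  have \<zeta>_tangent: "\<forall>\<alpha>\<in>{1..M-1}. \<zeta> \<alpha> = (\<Sum>\<gamma>\<in>{1..M-1}. u \<alpha> \<gamma> * y \<gamma>)"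
    by (intro ballI orthonormal_change_of_coefficients[OF finite_atLeastAtMost _ b_orth u tangent_part])
  have x_tangent: "x \<alpha> = (\<Sum>\<gamma>\<in>{1..M-1}. ub \<alpha> \<gamma> * \<zeta> \<gamma>) + D \<alpha> M / \<omega> * \<zeta> M"
    if "\<alpha> \<in> {1..M-1}" for \<alpha>
  proof -
    have "(\<Sum>\<gamma>\<in>{1..M-1}. ub \<alpha> \<gamma> * \<zeta> \<gamma>) = x \<alpha> - D \<alpha> M / D M M * x M"
      using left_inverse_coefficients[OF finite_atLeastAtMost that ub \<zeta>_tangent] by (simp add: y_def)
    moreover have "D \<alpha> M / D M M * x M = D \<alpha> M / \<omega> * \<zeta> M" using x_last D_last_pos by simp
    ultimately show ?thesis by simp
  qed
  show ?thesis
  proof (intro conjI ballI)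
    fix \<alpha> assume "\<alpha> \<in> {1..M-1}"
    then show "\<zeta> \<alpha> = (\<Sum>\<gamma>\<in>{1..M-1}. u \<alpha> \<gamma> * (x \<gamma> - D \<gamma> M / D M M * x M))"
      using \<zeta>_tangent by (simp add: y_def)
  next
    fix \<alpha> assume "\<alpha> \<in> {1..M-1}"
    then show "x \<alpha> = (\<Sum>\<gamma>\<in>{1..M-1}. ub \<alpha> \<gamma> * \<zeta> \<gamma>) + D \<alpha> M / \<omega> * \<zeta> M"
      by (rule x_tangent)
  qed (fact x_last \<zeta>_last)+
qed
lemma dual_inner_adapted_basis:
  assumes u: "\<forall>\<alpha>\<in>{1..M-1}. e \<alpha> = (\<Sum>\<beta>\<in>{1..M-1}. u \<beta> \<alpha> *\<^sub>R b \<beta>)"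
    and ub: "\<forall>\<alpha>\<in>{1..M-1}. \<forall>\<beta>\<in>{1..M-1}. (\<Sum>\<gamma>\<in>{1..M-1}. ub \<alpha> \<gamma> * u \<gamma> \<beta>) = (if \<alpha> = \<beta> then 1 else 0)"
    and dual: "\<And>a j. a \<in> {1..M} \<Longrightarrow> j \<in> {1..M} \<Longrightarrow> f a \<bullet> e j = (if a = j then 1 else 0)"
    and p: "p \<in> {1..M-1}" and \<gamma>: "\<gamma> \<in> {1..M}"
  shows "f p \<bullet> b \<gamma> = (if \<gamma> = M then D p M / \<omega> else ub p \<gamma>)"
proof -
  define \<delta> where "\<delta> k = (if k = \<gamma> then 1 else 0 :: real)" for k
  have "b \<gamma> = (\<Sum>j\<in>{1..M}. (f j \<bullet> b \<gamma>) *\<^sub>R e j)" by (rule is_basis_expansion[OF e_basis dual])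
  then have r_e: "b \<gamma> = (\<Sum>k\<in>{1..M-1}. (f k \<bullet> b \<gamma>) *\<^sub>R e k) + (f M \<bullet> b \<gamma>) *\<^sub>R n"
    by (simp only: sum_split_last[OF M_pos] e_last)
  have r_b: "b \<gamma> = (\<Sum>k\<in>{1..M-1}. \<delta> k *\<^sub>R b k) + \<delta> M *\<^sub>R b M"
    using \<gamma> by (cases "\<gamma> = M") (auto simp: \<delta>_def delta_mult_simps)
  have "f p \<bullet> b \<gamma> = (\<Sum>k\<in>{1..M-1}. ub p k * \<delta> k) + D p M / \<omega> * \<delta> M"
    using adapted_coordinates[OF u ub r_e r_b] p by blast
  then show ?thesis using \<gamma> by (cases "\<gamma> = M") (auto simp: \<delta>_def delta_mult_simps)
qed

lemma schur_complement:
  assumes u: "\<forall>\<alpha>\<in>{1..M-1}. e \<alpha> = (\<Sum>\<beta>\<in>{1..M-1}. u \<beta> \<alpha> *\<^sub>R b \<beta>)"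
    and ub: "\<forall>\<alpha>\<in>{1..M-1}. \<forall>\<beta>\<in>{1..M-1}. (\<Sum>\<gamma>\<in>{1..M-1}. ub \<alpha> \<gamma> * u \<gamma> \<beta>) = (if \<alpha> = \<beta> then 1 else 0)"
    and \<alpha>: "\<alpha> \<in> {1..M-1}" and \<beta>: "\<beta> \<in> {1..M-1}"
  shows "(\<Sum>\<gamma>\<in>{1..M-1}. ub \<alpha> \<gamma> * ub \<beta> \<gamma> * Dc \<gamma>) = D \<alpha> \<beta> - D \<alpha> M * D \<beta> M / D M M"
proof -
  obtain f where dual: "\<And>a j. a \<in> {1..M} \<Longrightarrow> j \<in> {1..M} \<Longrightarrow> f a \<bullet> e j = (if a = j then 1 else 0)"
    using is_basis_dual[OF e_basis] by blast
  have "\<alpha> \<in> {1..M}" "\<beta> \<in> {1..M}" using \<alpha> \<beta> by auto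
  then have "D \<alpha> \<beta> = f \<alpha> \<bullet> (T *v f \<beta>)"
    unfolding T_e by (rule tensor_matrix_coeff[OF finite_atLeastAtMost _ _ dual, symmetric])
  also have "\<dots> = (\<Sum>i\<in>{1..M}. Dc i * (f \<alpha> \<bullet> b i) * (f \<beta> \<bullet> b i))"
    by (simp add: T_b tensor_matrix_diagonal_mult_vec inner_sum_right inner_commute mult_ac)
  also have "\<dots> = (\<Sum>\<gamma>\<in>{1..M-1}. Dc \<gamma> * (f \<alpha> \<bullet> b \<gamma>) * (f \<beta> \<bullet> b \<gamma>))
      + Dc M * (f \<alpha> \<bullet> b M) * (f \<beta> \<bullet> b M)"
    by (rule sum_split_last[OF M_pos])
  also have "(\<Sum>\<gamma>\<in>{1..M-1}. Dc \<gamma> * (f \<alpha> \<bullet> b \<gamma>) * (f \<beta> \<bullet> b \<gamma>))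
      = (\<Sum>\<gamma>\<in>{1..M-1}. ub \<alpha> \<gamma> * ub \<beta> \<gamma> * Dc \<gamma>)"
  proof (rule sum.cong[OF refl])
    fix \<gamma> assume "\<gamma> \<in> {1..M-1}"
    then have \<gamma>: "\<gamma> \<in> {1..M}" "\<gamma> \<noteq> M" by auto
    then show "Dc \<gamma> * (f \<alpha> \<bullet> b \<gamma>) * (f \<beta> \<bullet> b \<gamma>) = ub \<alpha> \<gamma> * ub \<beta> \<gamma> * Dc \<gamma>"
      using dual_inner_adapted_basis[OF u ub dual \<alpha> \<gamma>(1)] dual_inner_adapted_basis[OF u ub dual \<beta> \<gamma>(1)] \<gamma>(2) by simp
  qed
  also have "Dc M * (f \<alpha> \<bullet> b M) * (f \<beta> \<bullet> b M) = Dc M * (D \<alpha> M / \<omega>) * (D \<beta> M / \<omega>)"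
    using dual_inner_adapted_basis[OF u ub dual \<alpha> last_mem] dual_inner_adapted_basis[OF u ub dual \<beta> last_mem] by simp
  also have "Dc M * (D \<alpha> M / \<omega>) * (D \<beta> M / \<omega>) = D \<alpha> M * D \<beta> M / D M M"
    using omega_pos by (simp add: Dc_last normal_T_normal power2_eq_square)
  finally show ?thesis by simp
qed

lemma change_of_coordinates:
  "0 < D M M \<and>
   (\<forall>(u :: nat \<Rightarrow> nat \<Rightarrow> real) (ub :: nat \<Rightarrow> nat \<Rightarrow> real).
      (\<forall>\<alpha>\<in>{1..M-1}. e \<alpha> = (\<Sum>\<beta>\<in>{1..M-1}. u \<beta> \<alpha> *\<^sub>R b \<beta>))
      \<and> (\<forall>\<alpha>\<in>{1..M-1}. \<forall>\<beta>\<in>{1..M-1}.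
           (\<Sum>\<gamma>\<in>{1..M-1}. ub \<alpha> \<gamma> * u \<gamma> \<beta>) = (if \<alpha> = \<beta> then 1 else 0))
      \<longrightarrow>
      (\<forall>(r :: real^'n) (x :: nat \<Rightarrow> real) (\<zeta> :: nat \<Rightarrow> real).
         r = (\<Sum>\<gamma>\<in>{1..M-1}. x \<gamma> *\<^sub>R e \<gamma>) + x M *\<^sub>R n
         \<and> r = (\<Sum>\<gamma>\<in>{1..M-1}. \<zeta> \<gamma> *\<^sub>R b \<gamma>) + \<zeta> M *\<^sub>R b M
         \<longrightarrow>
         (\<forall>\<alpha>\<in>{1..M-1}. \<zeta> \<alpha> = (\<Sum>\<gamma>\<in>{1..M-1}. u \<alpha> \<gamma> * (x \<gamma> - D \<gamma> M / D M M * x M)))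
         \<and> \<zeta> M = \<omega> / D M M * x M
         \<and> (\<forall>\<alpha>\<in>{1..M-1}. x \<alpha> = (\<Sum>\<gamma>\<in>{1..M-1}. ub \<alpha> \<gamma> * \<zeta> \<gamma>) + D \<alpha> M / \<omega> * \<zeta> M)
         \<and> x M = D M M / \<omega> * \<zeta> M)
      \<and> (\<forall>\<alpha>\<in>{1..M-1}. \<forall>\<beta>\<in>{1..M-1}.
           (\<Sum>\<gamma>\<in>{1..M-1}. ub \<alpha> \<gamma> * ub \<beta> \<gamma> * Dc \<gamma>) = D \<alpha> \<beta> - D \<alpha> M * D \<beta> M / D M M))"
  using D_last_pos adapted_coordinates schur_complement by blast

end

theorem proposition1:
  fixes e :: "nat \<Rightarrow> real^'n" and nv :: "real^'n" and nc :: "nat \<Rightarrow> real"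
    and D :: "nat \<Rightarrow> nat \<Rightarrow> real" and M :: nat
  assumes M_def: "M = CARD('n)" and M2: "M \<ge> 2"
    and ebasis: "is_basis M e"
    and n_comp: "nv = (\<Sum>j\<in>{1..M}. nc j *\<^sub>R e j)"
    and n_unit: "norm nv = 1"
    and D_sym: "\<forall>i\<in>{1..M}. \<forall>j\<in>{1..M}. D i j = D j i"
    and D_pd: "\<forall>\<xi>::nat \<Rightarrow> real. (\<exists>i\<in>{1..M}. \<xi> i \<noteq> 0) \<longrightarrow>
                 (\<Sum>i\<in>{1..M}. \<Sum>j\<in>{1..M}. \<xi> i * D i j * \<xi> j) > 0"
  shows "\<exists>(b :: nat \<Rightarrow> real^'n) (Dc :: nat \<Rightarrow> real).
    is_basis M b
    \<comment> \<open>(1)\<close>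
    \<and> (\<forall>\<alpha>\<in>{1..M-1}. \<forall>\<beta>\<in>{1..M-1}. b \<alpha> \<bullet> b \<beta> = (if \<alpha> = \<beta> then 1 else 0))
    \<and> (\<forall>\<alpha>\<in>{1..M-1}. b \<alpha> \<bullet> nv = 0)
    \<and> span (b ` {1..M-1}) = {r. r \<bullet> nv = 0}
    \<and> b M = (1 / omega M e D nc) *\<^sub>R
              (\<Sum>i\<in>{1..M}. \<Sum>j\<in>{1..M}. (Dmix M e D i j * nc j) *\<^sub>R e i)
    \<and> norm (b M) = 1 \<and> b M \<bullet> nv \<noteq> 0
    \<comment> \<open>(2)\<close>
    \<and> (\<forall>i\<in>{1..M}. Dc i > 0)
    \<and> (\<Sum>i\<in>{1..M}. \<Sum>j\<in>{1..M}. D i j *\<^sub>R tprod (e i) (e j))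
        = (\<Sum>i\<in>{1..M}. \<Sum>j\<in>{1..M}. (Dc i * (if i = j then 1 else 0)) *\<^sub>R tprod (b i) (b j))
    \<and> Dc M = (omega M e D nc)\<^sup>2 / (\<Sum>i\<in>{1..M}. \<Sum>j\<in>{1..M}. Dlow M e D i j * nc i * nc j)
    \<comment> \<open>(3)\<close>
    \<and> ((e M = nv \<and> (\<forall>\<alpha>\<in>{1..M-1}. e \<alpha> \<bullet> nv = 0)) \<longrightarrow>
        D M M > 0 \<and>
        (\<forall>(u :: nat \<Rightarrow> nat \<Rightarrow> real) (ub :: nat \<Rightarrow> nat \<Rightarrow> real).
          (\<forall>\<alpha>\<in>{1..M-1}. e \<alpha> = (\<Sum>\<beta>\<in>{1..M-1}. u \<beta> \<alpha> *\<^sub>R b \<beta>))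
          \<and> (\<forall>\<alpha>\<in>{1..M-1}. \<forall>\<beta>\<in>{1..M-1}.
               (\<Sum>\<gamma>\<in>{1..M-1}. ub \<alpha> \<gamma> * u \<gamma> \<beta>) = (if \<alpha> = \<beta> then 1 else 0))
          \<longrightarrow>
          (\<forall>(r :: real^'n) (x :: nat \<Rightarrow> real) (\<zeta> :: nat \<Rightarrow> real).
             r = (\<Sum>\<gamma>\<in>{1..M-1}. x \<gamma> *\<^sub>R e \<gamma>) + x M *\<^sub>R nv
             \<and> r = (\<Sum>\<gamma>\<in>{1..M-1}. \<zeta> \<gamma> *\<^sub>R b \<gamma>) + \<zeta> M *\<^sub>R b M
             \<longrightarrow>
             (\<forall>\<alpha>\<in>{1..M-1}. \<zeta> \<alpha> = (\<Sum>\<gamma>\<in>{1..M-1}. u \<alpha> \<gamma> * (x \<gamma> - D \<gamma> M / D M M * x M)))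
             \<and> \<zeta> M = omega M e D nc / D M M * x M
             \<and> (\<forall>\<alpha>\<in>{1..M-1}. x \<alpha> = (\<Sum>\<gamma>\<in>{1..M-1}. ub \<alpha> \<gamma> * \<zeta> \<gamma>)
                                   + D \<alpha> M / omega M e D nc * \<zeta> M)
             \<and> x M = D M M / omega M e D nc * \<zeta> M)
          \<and> (\<forall>\<alpha>\<in>{1..M-1}. \<forall>\<beta>\<in>{1..M-1}.
               (\<Sum>\<gamma>\<in>{1..M-1}. ub \<alpha> \<gamma> * ub \<beta> \<gamma> * Dc \<gamma>)
               = D \<alpha> \<beta> - D \<alpha> M * D \<beta> M / D M M)))"
proof -
  define T where "T = tensor_matrix {1..M} e D"
  have T_sym: "(T *v x) \<bullet> y = x \<bullet> (T *v y)" for x y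
    using D_sym by (simp add: T_def tensor_matrix_symmetric)
  have T_pd: "0 < v \<bullet> (T *v v)" if "v \<noteq> 0" for v
    using ebasis D_pd that by (simp add: T_def is_basis_def tensor_matrix_pos_def)
  obtain b Dc where b_basis: "is_basis M b"
    and b_orth: "\<forall>\<alpha>\<in>{1..M-1}. \<forall>\<beta>\<in>{1..M-1}. b \<alpha> \<bullet> b \<beta> = (if \<alpha> = \<beta> then 1 else 0)"
    and b_tangent: "\<forall>\<alpha>\<in>{1..M-1}. b \<alpha> \<bullet> nv = 0" and b_span: "span (b ` {1..M-1}) = {r. r \<bullet> nv = 0}"
    and b_last: "b M = (1 / norm (T *v nv)) *\<^sub>R (T *v nv)"
    and b_last_norm: "norm (b M) = 1" and b_last_normal: "0 < b M \<bullet> nv"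
    and Dc_pos: "\<forall>i\<in>{1..M}. 0 < Dc i"
    and T_b: "T = tensor_matrix {1..M} b (\<lambda>i j. Dc i * (if i = j then 1 else 0))"
    and Dc_last: "Dc M = (norm (T *v nv))\<^sup>2 / (nv \<bullet> (T *v nv))"
    using hyperplane_adapted_diagonalizing_basis[OF M_def T_sym T_pd n_unit] by blast
  have omega_T: "omega M e D nc = norm (T *v nv)"
    unfolding T_def by (rule omega_eq_norm[OF n_comp])
  have "adapted_bases M e b nv D Dc T (omega M e D nc)"
    if "e M = nv \<and> (\<forall>\<alpha>\<in>{1..M-1}. e \<alpha> \<bullet> nv = 0)"
    using that M2 ebasis n_unit T_b b_orth b_tangent b_last Dc_last omega_T
      pos_def_diagonal_pos[OF D_pd, of M]
    by unfold_locales (auto simp: T_def)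
  note part3 = impI[OF adapted_bases.change_of_coordinates[OF this]]
  from b_last_normal have "b M \<bullet> nv \<noteq> 0" by simp
  then show ?thesis
    using b_basis b_orth b_tangent b_span b_last_norm Dc_pos part3
      b_last[unfolded omega_T[symmetric], unfolded T_def tensor_matrix_mult_normal[OF n_comp] scaleR_sum_left]
      T_b[unfolded T_def tensor_matrix_def]
      Dc_last[unfolded omega_T[symmetric], unfolded T_def sum_Dlow_eq_inner_normal[OF n_comp, symmetric]]
    by (intro exI[of _ b] exI[of _ Dc] conjI)
qed

end
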